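(* Let $X$ be a finite $T_0$ topological space, $\mathcal V$ a multivector field on $X$ with $X$ invariant, and $\mathcal M=\{M_p\mid p\in\mathbb P\}$ a Morse predecomposition of $X$. Then for every nonempty isolated invariant set $S\subset X$ we have $S\cap\bigcup_{p\in\mathbb P}M_p\ne\emptyset$. In particular, every critical multivector $V\in\mathcal V$ satisfies $V\subset\bigcup_{p\in\mathbb P}M_p$.
   Context: Notation: $\operatorname{cl}$ is closure; $A\subset X$ is locally closed if $\operatorname{cl}A\setminus A$ is closed. A multivector field $\mathcal V$ on $X$ is a partition of $X$ into locally closed sets (multivectors); $[x]_{\mathcal V}$ is the multivector containing $x$. A multivector $V$ is critical if the relative singular homology $H(\operatorname{cl}V,\operatorname{cl}V\setminus V)$ is nontrivial, regular otherwise. $A$ is $\mathcal V$-compatible if it is a union of multivectors; $\langle A\rangle_{\mathcal V}$ is the smallest locally closed $\mathcal V$-compatible set containing $A$. $\Pi_{\mathcal V}(x)=\operatorname{cl}\{x\}\cup[x]_{\mathcal V}$. A solution is a partial map $\gamma:\mathbb Z\nrightarrow X$ with domain an integer interval and $\gamma(t+1)\in\Pi_{\mathcal V}(\gamma(t))$; a path has finite domain; a full solution has domain $\mathbb Z$. $\alpha(\gamma)=\langle\bigcap_{t\le0}\gamma((-\infty,t])\rangle_{\mathcal V}$, $\omega(\gamma)=\langle\bigcap_{t\ge0}\gamma([t,\infty))\rangle_{\mathcal V}$. A full solution is essential unless $\alpha(\gamma)$ or $\omega(\gamma)$ lies in a single regular multivector; an essential solution in $A$ is one with image in $A$. $\operatorname{Inv}S$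 is the set of $x\in S$ with an essential solution $\gamma$ in $S$, $\gamma(0)=x$; $S$ is invariant if $\operatorname{Inv}S=S$. An invariant $S$ is isolated invariant if there is a closed $N\supset\Pi_{\mathcal V}(S)$ such that every path in $N$ with endpoints in $S$ has image in $S$. A link from $S_1$ to $S_2$ is a full solution with $\alpha(\gamma)\cap S_1\ne\emptyset\ne\omega(\gamma)\cap S_2$. A Morse predecomposition of $X$ is an indexed family $\{M_p\mid p\in\mathbb P\}$ of mutually disjoint isolated invariant subsets of $X$ such that every essential solution in $X$ is a link from some $M_p$ to some $M_q$. *)

theory Defs
  imports "HOL-Analysis.Analysis" "HOL-Homology.Homology"
begin

definition locally_closed :: "'a topology \<Rightarrow> 'a set \<Rightarrow> bool" where
  "locally_closed T A \<longleftrightarrow> A \<subseteq> topspace T \<and> closedin T (T closure_of A - A)"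

definition multivector_field :: "'a topology \<Rightarrow> 'a set set \<Rightarrow> bool" where
  "multivector_field T VV \<longleftrightarrow>
     \<Union>VV = topspace T \<and> {} \<notin> VV \<and>
     (\<forall>V\<in>VV. \<forall>W\<in>VV. V \<noteq> W \<longrightarrow> V \<inter> W = {}) \<and>
     (\<forall>V\<in>VV. locally_closed T V)"

definition mv_of :: "'a set set \<Rightarrow> 'a \<Rightarrow> 'a set" where
  "mv_of VV x = (THE V. V \<in> VV \<and> x \<in> V)"

definition critical :: "'a topology \<Rightarrow> 'a set \<Rightarrow> bool" where
  "critical T V \<longleftrightarrow>
     (\<exists>p. \<not> trivial_group
            (relative_homology_group p (subtopology T (T closure_of V)) (T closure_of V - V)))"

definition regular :: "'a topology \<Rightarrow> 'a set \<Rightarrow> bool" where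
  "regular T V \<longleftrightarrow> \<not> critical T V"

definition mv_compatible :: "'a set set \<Rightarrow> 'a set \<Rightarrow> bool" where
  "mv_compatible VV A \<longleftrightarrow> (\<exists>W\<subseteq>VV. A = \<Union>W)"

definition lc_hull :: "'a topology \<Rightarrow> 'a set set \<Rightarrow> 'a set \<Rightarrow> 'a set" where
  "lc_hull T VV A = (LEAST B. A \<subseteq> B \<and> locally_closed T B \<and> mv_compatible VV B)"

definition Pi_mv :: "'a topology \<Rightarrow> 'a set set \<Rightarrow> 'a \<Rightarrow> 'a set" where
  "Pi_mv T VV x = T closure_of {x} \<union> mv_of VV x"

definition full_solution :: "'a topology \<Rightarrow> 'a set set \<Rightarrow> (int \<Rightarrow> 'a) \<Rightarrow> bool" where
  "full_solution T VV g \<longleftrightarrow> range g \<subseteq> topspace T \<and> (\<forall>t. g (t + 1) \<in> Pi_mv T VV (g t))"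

definition is_path :: "'a topology \<Rightarrow> 'a set set \<Rightarrow> int \<Rightarrow> int \<Rightarrow> (int \<Rightarrow> 'a) \<Rightarrow> bool" where
  "is_path T VV a b g \<longleftrightarrow> a \<le> b \<and> g ` {a..b} \<subseteq> topspace T \<and>
     (\<forall>t\<in>{a..<b}. g (t + 1) \<in> Pi_mv T VV (g t))"

definition alpha_lim :: "'a topology \<Rightarrow> 'a set set \<Rightarrow> (int \<Rightarrow> 'a) \<Rightarrow> 'a set" where
  "alpha_lim T VV g = lc_hull T VV (\<Inter>t\<in>{..0}. g ` {..t})"

definition omega_lim :: "'a topology \<Rightarrow> 'a set set \<Rightarrow> (int \<Rightarrow> 'a) \<Rightarrow> 'a set" where
  "omega_lim T VV g = lc_hull T VV (\<Inter>t\<in>{0..}. g ` {t..})"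

definition essential :: "'a topology \<Rightarrow> 'a set set \<Rightarrow> (int \<Rightarrow> 'a) \<Rightarrow> bool" where
  "essential T VV g \<longleftrightarrow> full_solution T VV g \<and>
     \<not> (\<exists>V\<in>VV. regular T V \<and> alpha_lim T VV g \<subseteq> V) \<and>
     \<not> (\<exists>V\<in>VV. regular T V \<and> omega_lim T VV g \<subseteq> V)"

definition Inv :: "'a topology \<Rightarrow> 'a set set \<Rightarrow> 'a set \<Rightarrow> 'a set" where
  "Inv T VV S = {x \<in> S. \<exists>g. essential T VV g \<and> range g \<subseteq> S \<and> g 0 = x}"

definition invariant :: "'a topology \<Rightarrow> 'a set set \<Rightarrow> 'a set \<Rightarrow> bool" where
  "invariant T VV S \<longleftrightarrow> Inv T VV S = S"

definition isolated_invariant :: "'a topology \<Rightarrow> 'a set set \<Rightarrow> 'a set \<Rightarrow> bool" where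
  "isolated_invariant T VV S \<longleftrightarrow> invariant T VV S \<and>
     (\<exists>N. closedin T N \<and> (\<Union>x\<in>S. Pi_mv T VV x) \<subseteq> N \<and>
        (\<forall>a b g. is_path T VV a b g \<and> g ` {a..b} \<subseteq> N \<and> g a \<in> S \<and> g b \<in> S
                 \<longrightarrow> g ` {a..b} \<subseteq> S))"

definition is_link :: "'a topology \<Rightarrow> 'a set set \<Rightarrow> (int \<Rightarrow> 'a) \<Rightarrow> 'a set \<Rightarrow> 'a set \<Rightarrow> bool" where
  "is_link T VV g S1 S2 \<longleftrightarrow> full_solution T VV g \<and>
     alpha_lim T VV g \<inter> S1 \<noteq> {} \<and> omega_lim T VV g \<inter> S2 \<noteq> {}"

definition morse_predecomposition ::
    "'a topology \<Rightarrow> 'a set set \<Rightarrow> 'p set \<Rightarrow> ('p \<Rightarrow> 'a set) \<Rightarrow> bool" where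
  "morse_predecomposition T VV P M \<longleftrightarrow>
     (\<forall>p\<in>P. M p \<subseteq> topspace T \<and> isolated_invariant T VV (M p)) \<and>
     (\<forall>p\<in>P. \<forall>q\<in>P. p \<noteq> q \<longrightarrow> M p \<inter> M q = {}) \<and>
     (\<forall>g. essential T VV g \<and> range g \<subseteq> topspace T \<longrightarrow>
          (\<exists>p\<in>P. \<exists>q\<in>P. is_link T VV g (M p) (M q)))"

end

theory Submission
  imports Defs
begin

(* An isolated invariant set S is closed under two-step paths s \<rightarrow> y \<rightarrow> x with s, x \<in> S.
   In a finite space local closedness is convexity in the specialization preorder, so
   this makes S locally closed; it also makes S V-compatible.  Hence S contains the
   alpha-limit set of every solution in S.  Being nonempty and invariant, S carries an
   essential solution, which is a link out of some Morse set M p; its alpha-limit set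
   meets M p and lies in S.
   For a critical multivector V, the constant solution at a point of V has alpha- and
   omega-limit set V, hence is essential; so V meets some M p, and since M p is
   V-compatible, V \<subseteq> M p. *)

lemma closure_of_finite_eq_UN_singletons:
  assumes "finite A"
  shows "T closure_of A = (\<Union>a\<in>A. T closure_of {a})"
  using closure_of_Union[of "(\<lambda>a. {a}) ` A" T] assms by simp

(* Convexity for the specialization preorder, where y \<le> s iff y \<in> cl {s}. *)
definition specialization_convex :: "'a topology \<Rightarrow> 'a set \<Rightarrow> bool" where
  "specialization_convex T A \<longleftrightarrow>
     (\<forall>s\<in>A. \<forall>x\<in>A. \<forall>y. y \<in> T closure_of {s} \<and> x \<in> T closure_of {y} \<longrightarrow> y \<in> A)"

lemma locally_closed_imp_specialization_convex:
  assumes "locally_closed T A"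
  shows "specialization_convex T A"
  unfolding specialization_convex_def
proof (intro ballI allI impI)
  fix s x y
  assume "s \<in> A" "x \<in> A" and y: "y \<in> T closure_of {s} \<and> x \<in> T closure_of {y}"
  show "y \<in> A"
  proof (rule ccontr)
    assume "y \<notin> A"
    moreover have "y \<in> T closure_of A"
      using y \<open>s \<in> A\<close> closure_of_mono[of "{s}" A T] by blast
    moreover have "closedin T (T closure_of A - A)"
      using assms unfolding locally_closed_def by blast
    ultimately have "T closure_of {y} \<subseteq> T closure_of A - A"
      by (simp add: closure_of_minimal)
    then show False using y \<open>x \<in> A\<close> by blast
  qed
qed

lemma specialization_convex_imp_locally_closed:
  assumes fin: "finite (topspace T)" and A: "A \<subseteq> topspace T"
    and convex: "specialization_convex T A"
  shows "locally_closed T A"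
proof -
  let ?C = "T closure_of A - A"
  have C: "?C \<subseteq> topspace T"
    using closure_of_subset_topspace[of T A] by blast
  have "T closure_of ?C \<subseteq> ?C"
  proof
    fix w assume "w \<in> T closure_of ?C"
    then obtain u where u: "u \<in> ?C" "w \<in> T closure_of {u}"
      using closure_of_finite_eq_UN_singletons[of ?C T] finite_subset[OF C fin] by blast
    then obtain s where s: "s \<in> A" "u \<in> T closure_of {s}"
      using closure_of_finite_eq_UN_singletons[of A T] finite_subset[OF A fin] by blast
    have "w \<in> T closure_of {s}"
      using u s closure_of_minimal[of "{u}" "T closure_of {s}" T] by auto
    then have "w \<in> T closure_of A"
      using s closure_of_mono[of "{s}" A T] by blast
    moreover have "w \<notin> A"
      using convex s u unfolding specialization_convex_def by blast
    ultimately show "w \<in> ?C" by blast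
  qed
  then have "closedin T ?C"
    using closure_of_eq closure_of_subset[OF C] by blast
  then show ?thesis
    using A unfolding locally_closed_def by blast
qed

lemma mv_of_eq:
  assumes "multivector_field T VV" "V \<in> VV" "x \<in> V"
  shows "mv_of VV x = V"
  unfolding mv_of_def
  using assms unfolding multivector_field_def
  by (intro the_equality) blast+

lemma multivector_eqI:
  assumes "multivector_field T VV" "V \<in> VV" "W \<in> VV" "z \<in> V" "z \<in> W"
  shows "V = W"
  using assms unfolding multivector_field_def by blast

lemma multivector_subset_topspace:
  assumes "multivector_field T VV" "V \<in> VV"
  shows "V \<subseteq> topspace T"
  using assms unfolding multivector_field_def by (metis Union_upper)

lemma multivector_nonempty:
  assumes "multivector_field T VV" "V \<in> VV"
  shows "V \<noteq> {}"
  using assms unfolding multivector_field_def by auto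

lemma mv_compatible_iff:
  assumes mv: "multivector_field T VV" and A: "A \<subseteq> topspace T"
  shows "mv_compatible VV A \<longleftrightarrow> (\<forall>V\<in>VV. V \<inter> A \<noteq> {} \<longrightarrow> V \<subseteq> A)"
proof
  assume "mv_compatible VV A"
  then obtain W where W: "W \<subseteq> VV" "A = \<Union>W"
    unfolding mv_compatible_def by blast
  show "\<forall>V\<in>VV. V \<inter> A \<noteq> {} \<longrightarrow> V \<subseteq> A"
  proof (intro ballI impI)
    fix V assume V: "V \<in> VV" "V \<inter> A \<noteq> {}"
    then obtain z where z: "z \<in> V" "z \<in> A" by blast
    then obtain U where U: "U \<in> W" "z \<in> U" using W(2) by blast
    then have "U = V" using multivector_eqI[OF mv _ V(1) U(2) z(1)] W(1) by blast
    then show "V \<subseteq> A" using W(2) U(1) by blast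
  qed
next
  assume closed: "\<forall>V\<in>VV. V \<inter> A \<noteq> {} \<longrightarrow> V \<subseteq> A"
  show "mv_compatible VV A"
    unfolding mv_compatible_def
  proof (intro exI[of _ "{V\<in>VV. V \<subseteq> A}"] conjI)
    show "A = \<Union>{V\<in>VV. V \<subseteq> A}"
    proof (rule subset_antisym)
      show "A \<subseteq> \<Union>{V\<in>VV. V \<subseteq> A}"
      proof
        fix z assume "z \<in> A"
        then have "z \<in> \<Union>VV" using A mv unfolding multivector_field_def by auto
        then show "z \<in> \<Union>{V\<in>VV. V \<subseteq> A}" using closed \<open>z \<in> A\<close> by blast
      qed
    qed blast
  qed blast
qed

lemma locally_closed_mv_compatible_Inter:
  assumes fin: "finite (topspace T)" and mv: "multivector_field T VV"
    and "F \<noteq> {}" and F: "\<forall>B\<in>F. locally_closed T B \<and> mv_compatible VV B"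
  shows "locally_closed T (\<Inter>F) \<and> mv_compatible VV (\<Inter>F)"
proof
  have top: "\<Inter>F \<subseteq> topspace T"
    using \<open>F \<noteq> {}\<close> F unfolding locally_closed_def by blast
  have "specialization_convex T B" if "B \<in> F" for B
    using F that locally_closed_imp_specialization_convex by blast
  then have "specialization_convex T (\<Inter>F)"
    unfolding specialization_convex_def by blast
  then show "locally_closed T (\<Inter>F)"
    using specialization_convex_imp_locally_closed[OF fin top] by blast
  have "\<forall>V\<in>VV. V \<inter> B \<noteq> {} \<longrightarrow> V \<subseteq> B" if "B \<in> F" for B
    using F that mv_compatible_iff[OF mv] unfolding locally_closed_def by blast
  then show "mv_compatible VV (\<Inter>F)"
    using mv_compatible_iff[OF mv top] by blast
qed

lemma topspace_locally_closed_mv_compatible: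
  assumes "multivector_field T VV"
  shows "locally_closed T (topspace T) \<and> mv_compatible VV (topspace T)"
  using assms unfolding locally_closed_def mv_compatible_def multivector_field_def
  by auto

lemma lc_hull_eq_Inter:
  assumes fin: "finite (topspace T)" and mv: "multivector_field T VV"
    and A: "A \<subseteq> topspace T"
  shows "lc_hull T VV A = \<Inter>{B. A \<subseteq> B \<and> locally_closed T B \<and> mv_compatible VV B}"
    (is "_ = \<Inter>?F")
proof -
  have "topspace T \<in> ?F"
    using A topspace_locally_closed_mv_compatible[OF mv] by simp
  then have "locally_closed T (\<Inter>?F) \<and> mv_compatible VV (\<Inter>?F)"
    using locally_closed_mv_compatible_Inter[OF fin mv, of ?F] by blast
  then show ?thesis
    unfolding lc_hull_def by (intro Least_equality) auto
qed

lemma lc_hull_admissible: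
  assumes fin: "finite (topspace T)" and mv: "multivector_field T VV"
    and A: "A \<subseteq> topspace T"
  shows "A \<subseteq> lc_hull T VV A \<and> locally_closed T (lc_hull T VV A)
           \<and> mv_compatible VV (lc_hull T VV A)"
proof -
  let ?F = "{B. A \<subseteq> B \<and> locally_closed T B \<and> mv_compatible VV B}"
  have "topspace T \<in> ?F"
    using A topspace_locally_closed_mv_compatible[OF mv] by simp
  then have "locally_closed T (\<Inter>?F) \<and> mv_compatible VV (\<Inter>?F)"
    using locally_closed_mv_compatible_Inter[OF fin mv, of ?F] by blast
  moreover have "A \<subseteq> \<Inter>?F" by blast
  ultimately show ?thesis
    using lc_hull_eq_Inter[OF fin mv A] by simp
qed

lemma lc_hull_minimal:
  assumes "finite (topspace T)" "multivector_field T VV"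
    and "A \<subseteq> S" "locally_closed T S" "mv_compatible VV S"
  shows "lc_hull T VV A \<subseteq> S"
proof -
  have "A \<subseteq> topspace T"
    using assms(3,4) unfolding locally_closed_def by blast
  then show ?thesis
    using lc_hull_eq_Inter[OF assms(1,2)] assms(3-5) by blast
qed

lemma lc_hull_multivector:
  assumes fin: "finite (topspace T)" and mv: "multivector_field T VV"
    and "V \<in> VV" "x \<in> V"
  shows "lc_hull T VV {x} = V"
proof
  have "locally_closed T V" "mv_compatible VV V"
    using assms(3) mv unfolding multivector_field_def mv_compatible_def by auto
  then show "lc_hull T VV {x} \<subseteq> V"
    using lc_hull_minimal[OF fin mv] \<open>x \<in> V\<close> by blast
  have "{x} \<subseteq> topspace T"
    using multivector_subset_topspace[OF mv assms(3)] assms(4) by blast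
  then have "x \<in> lc_hull T VV {x}" "mv_compatible VV (lc_hull T VV {x})"
            "lc_hull T VV {x} \<subseteq> topspace T"
    using lc_hull_admissible[OF fin mv] unfolding locally_closed_def by blast+
  then show "V \<subseteq> lc_hull T VV {x}"
    using mv_compatible_iff[OF mv] assms(3,4) by blast
qed

lemma isolated_invariant_two_step_closed:
  assumes S: "S \<subseteq> topspace T" and iso: "isolated_invariant T VV S"
    and "s \<in> S" "x \<in> S" "y \<in> Pi_mv T VV s" "x \<in> Pi_mv T VV y"
  shows "y \<in> S"
proof -
  obtain N where "closedin T N" and N: "(\<Union>z\<in>S. Pi_mv T VV z) \<subseteq> N"
    and isolating: "\<And>a b g. is_path T VV a b g \<and> g ` {a..b} \<subseteq> N \<and> g a \<in> S \<and> g b \<in> S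
                      \<Longrightarrow> g ` {a..b} \<subseteq> S"
    using iso unfolding isolated_invariant_def by blast
  have self: "z \<in> Pi_mv T VV z" if "z \<in> S" for z
    using that S closure_of_subset[of "{z}" T] unfolding Pi_mv_def by blast
  define g where "g = (\<lambda>t::int. if t = 0 then s else if t = 1 then y else x)"
  have "{0..2::int} = {0, 1, 2}" "{0..<2::int} = {0, 1}" by auto
  then have g: "g ` {0..2} = {s, y, x}" "\<forall>t\<in>{0..<2}. g (t + 1) \<in> Pi_mv T VV (g t)"
    using assms(5,6) unfolding g_def by auto
  have "{s, y, x} \<subseteq> N"
    using self assms(3-5) N by blast
  moreover have "N \<subseteq> topspace T"
    using \<open>closedin T N\<close> closedin_subset by blast
  ultimately have "is_path T VV 0 2 g"
    using g unfolding is_path_def by auto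
  moreover have "g 0 = s" "g 2 = x"
    unfolding g_def by simp_all
  ultimately have "g ` {0..2} \<subseteq> S"
    using isolating[of 0 2 g] g(1) \<open>{s, y, x} \<subseteq> N\<close> assms(3,4) by simp
  then show ?thesis using g by simp
qed

lemma isolated_invariant_locally_closed:
  assumes "finite (topspace T)" "S \<subseteq> topspace T" "isolated_invariant T VV S"
  shows "locally_closed T S"
proof -
  have "specialization_convex T S"
    using isolated_invariant_two_step_closed[OF assms(2,3)]
    unfolding specialization_convex_def Pi_mv_def by blast
  then show ?thesis
    using specialization_convex_imp_locally_closed assms(1,2) by blast
qed

lemma isolated_invariant_mv_compatible:
  assumes mv: "multivector_field T VV"
    and "S \<subseteq> topspace T" "isolated_invariant T VV S"
  shows "mv_compatible VV S"
  unfolding mv_compatible_iff[OF mv assms(2)]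
proof (intro ballI impI subsetI)
  fix V w assume "V \<in> VV" "V \<inter> S \<noteq> {}" "w \<in> V"
  then obtain z where "z \<in> V" "z \<in> S" by blast
  have "w \<in> Pi_mv T VV z" "z \<in> Pi_mv T VV w"
    using mv_of_eq[OF mv \<open>V \<in> VV\<close>] \<open>z \<in> V\<close> \<open>w \<in> V\<close> unfolding Pi_mv_def by auto
  then show "w \<in> S"
    using isolated_invariant_two_step_closed[OF assms(2,3) \<open>z \<in> S\<close> \<open>z \<in> S\<close>] by blast
qed

lemma alpha_lim_subset:
  assumes "finite (topspace T)" "multivector_field T VV"
    and "locally_closed T S" "mv_compatible VV S" "range g \<subseteq> S"
  shows "alpha_lim T VV g \<subseteq> S"
  unfolding alpha_lim_def
  by (rule lc_hull_minimal[OF assms(1,2) _ assms(3,4)]) (use assms(5) in blast)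

lemma alpha_lim_const: "alpha_lim T VV (\<lambda>_. x) = lc_hull T VV {x}"
proof -
  have "(\<Inter>t\<in>{..0::int}. (\<lambda>_. x) ` {..t}) = {x}" by auto
  then show ?thesis unfolding alpha_lim_def by simp
qed

lemma omega_lim_const: "omega_lim T VV (\<lambda>_. x) = lc_hull T VV {x}"
proof -
  have "(\<Inter>t\<in>{0::int..}. (\<lambda>_. x) ` {t..}) = {x}" by auto
  then show ?thesis unfolding omega_lim_def by simp
qed

lemma essential_const_critical:
  assumes fin: "finite (topspace T)" and mv: "multivector_field T VV"
    and "V \<in> VV" "x \<in> V" "critical T V"
  shows "essential T VV (\<lambda>_. x)"
proof -
  have "x \<in> topspace T"
    using multivector_subset_topspace[OF mv assms(3)] assms(4) by blast
  then have "full_solution T VV (\<lambda>_. x)"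
    unfolding full_solution_def Pi_mv_def using closure_of_subset[of "{x}" T] by auto
  moreover have "\<not> (\<exists>W\<in>VV. regular T W \<and> V \<subseteq> W)"
    using multivector_eqI[OF mv] assms(3-5) unfolding regular_def by blast
  ultimately show ?thesis
    unfolding essential_def alpha_lim_const omega_lim_const
      lc_hull_multivector[OF fin mv assms(3,4)] by blast
qed

lemma morse_predecomposition_alpha_meets:
  assumes "morse_predecomposition T VV P M"
    and "essential T VV g" "range g \<subseteq> topspace T"
  obtains p where "p \<in> P" "alpha_lim T VV g \<inter> M p \<noteq> {}"
proof -
  have "\<exists>p\<in>P. \<exists>q\<in>P. is_link T VV g (M p) (M q)"
    using assms unfolding morse_predecomposition_def by simp
  then show ?thesis
    using that unfolding is_link_def by blast
qed

lemma morse_set_isolated_invariant: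
  assumes "morse_predecomposition T VV P M" "p \<in> P"
  shows "M p \<subseteq> topspace T" "isolated_invariant T VV (M p)"
  using assms unfolding morse_predecomposition_def by simp_all

lemma isolated_invariant_meets_morse_sets:
  assumes fin: "finite (topspace T)" and mv: "multivector_field T VV"
    and morse: "morse_predecomposition T VV P M"
    and S: "S \<subseteq> topspace T" "S \<noteq> {}" "isolated_invariant T VV S"
  shows "S \<inter> (\<Union>p\<in>P. M p) \<noteq> {}"
proof -
  obtain x where "x \<in> S" using S(2) by blast
  then have "x \<in> Inv T VV S"
    using S(3) unfolding isolated_invariant_def invariant_def by simp
  then obtain g where g: "essential T VV g" "range g \<subseteq> S"
    unfolding Inv_def by blast
  then obtain p where "p \<in> P" "alpha_lim T VV g \<inter> M p \<noteq> {}"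
    using morse_predecomposition_alpha_meets[OF morse] S(1) by blast
  moreover have "alpha_lim T VV g \<subseteq> S"
    using alpha_lim_subset[OF fin mv _ _ g(2)] isolated_invariant_locally_closed[OF fin S(1,3)]
      isolated_invariant_mv_compatible[OF mv S(1,3)] by blast
  ultimately show ?thesis by blast
qed

lemma critical_subset_morse_sets:
  assumes fin: "finite (topspace T)" and mv: "multivector_field T VV"
    and morse: "morse_predecomposition T VV P M"
    and V: "V \<in> VV" "critical T V"
  shows "V \<subseteq> (\<Union>p\<in>P. M p)"
proof -
  obtain x where x: "x \<in> V"
    using multivector_nonempty[OF mv V(1)] by blast
  have "range (\<lambda>_::int. x) \<subseteq> topspace T"
    using multivector_subset_topspace[OF mv V(1)] x by blast
  then obtain p where p: "p \<in> P" "alpha_lim T VV (\<lambda>_. x) \<inter> M p \<noteq> {}"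
    using morse_predecomposition_alpha_meets[OF morse essential_const_critical[OF fin mv V(1) x V(2)]]
    by blast
  have "alpha_lim T VV (\<lambda>_. x) = V"
    unfolding alpha_lim_const using lc_hull_multivector[OF fin mv V(1) x] .
  then have "V \<inter> M p \<noteq> {}"
    using p(2) by simp
  moreover have Mp: "M p \<subseteq> topspace T" "isolated_invariant T VV (M p)"
    using morse_set_isolated_invariant[OF morse p(1)] by simp_all
  then have "\<forall>W\<in>VV. W \<inter> M p \<noteq> {} \<longrightarrow> W \<subseteq> M p"
    using isolated_invariant_mv_compatible[OF mv Mp] mv_compatible_iff[OF mv Mp(1)] by simp
  ultimately have "V \<subseteq> M p"
    using V(1) by blast
  then show ?thesis
    using p(1) by blast
qed

theorem proposition4p4:
  fixes T :: "'a topology" and VV :: "'a set set" and P :: "'p set" and M :: "'p \<Rightarrow> 'a set"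
  assumes "finite (topspace T)"
    and "t0_space T"
    and "multivector_field T VV"
    and "invariant T VV (topspace T)"
    and "morse_predecomposition T VV P M"
  shows "(\<forall>S. S \<subseteq> topspace T \<and> S \<noteq> {} \<and> isolated_invariant T VV S
              \<longrightarrow> S \<inter> (\<Union>p\<in>P. M p) \<noteq> {})
         \<and> (\<forall>V\<in>VV. critical T V \<longrightarrow> V \<subseteq> (\<Union>p\<in>P. M p))"
  using isolated_invariant_meets_morse_sets[OF assms(1,3,5)]
    critical_subset_morse_sets[OF assms(1,3,5)] by auto

end
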